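(* Consider the two-route traffic model described in the context, under the assumptions (A1)–(A5) listed there. Let $P:=\{x\in\Omega:\ 0\le x_1\le C_1,\ 0\le x_2\le C_2\}$. Then: (i) $P$ is positively invariant, i.e., every solution $x(t)$ of the system with $x(0)\in P$ satisfies $x(t)\in P$ for all $t\ge 0$; (ii) $P$ is globally attractive, i.e., for every open neighbourhood $U$ of $P$ and every initial condition $x_0\in\Omega$ there exists $\tau(x_0)>0$ such that the solution starting at $x_0$ lies in $U$ for all $t>\tau(x_0)$.
   Context: Two routes $i=1,2$ connect an origin to a destination. For each route there are positive parameters $B_i$ (jam density), $C_i$ (critical density), $F_i$ (maximum capacity) with $C_i<B_i$; the traffic demand is a constant $\phi>0$. Set $v_i=F_i/C_i$. The state is $x=(x_1,x_2)\in\Omega:=[0,B_1]\times[0,B_2]$ and evolves by $\dot x_i=\min\{\phi R_i(x),S_i(x_i)\}-D_i(x_i)$, $i=1,2$, where the supply is $S_i(x_i)=F_i$ if $x_i<C_i$ and $S_i(x_i)=\frac{F_i}{B_i-C_i}(B_i-x_i)$ otherwise, and the demand is $D_i(x_i)=v_ix_i$ if $x_i<C_i$ and $D_i(x_i)=F_i$ otherwise. The routing ratios are $R_i(x)=(1-\alpha)r_i^0+\alpha\, r_i(\tau(x))$, where $\alpha\in(0,1]$ (penetration rate), $r_1^0,r_2^0\ge 0$ are constants with $r_1^0+r_2^0=1$, $\tau(x)=(\tau_1(x_1),\tau_2(x_2))$ with each travel time $\tau_i$ a $C^1$ strictly increasing function, and the functions $r_i$ satisfy $0\le r_i(\tau(x))\le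 1$, $r_1(\tau(x))+r_2(\tau(x))=1$ for all $x\in\Omega$, and $x\mapsto r_i(\tau(x))$ is globally Lipschitz and $C^1$ on $\Omega$. Assumptions: (A1) $\phi<F_1+F_2$; (A2)–(A3) the properties of $\tau_i$, $r_i$ just listed; (A4) the routing ratios are strictly monotone: $\partial R_i/\partial \tau_j>0$ for $i\neq j$; (A5) $F_i>(1-\alpha)\phi r_i^0$ for $i=1,2$. *)

theory Defs
  imports "HOL-Analysis.Analysis"
begin

definition supply_fn :: "real \<Rightarrow> real \<Rightarrow> real \<Rightarrow> real \<Rightarrow> real" where
  "supply_fn B C F s = (if s < C then F else F / (B - C) * (B - s))"

definition demand_fn :: "real \<Rightarrow> real \<Rightarrow> real \<Rightarrow> real" where
  "demand_fn C F s = (if s < C then (F / C) * s else F)"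

definition C1_on_state :: "(real \<times> real) set \<Rightarrow> (real \<times> real \<Rightarrow> real) \<Rightarrow> bool" where
  "C1_on_state S f \<longleftrightarrow> (\<exists>g1 g2. continuous_on S g1 \<and> continuous_on S g2 \<and>
     (\<forall>x\<in>S. (f has_derivative (\<lambda>h. g1 x * fst h + g2 x * snd h)) (at x within S)))"

definition C1_strict_incr_on :: "real set \<Rightarrow> (real \<Rightarrow> real) \<Rightarrow> bool" where
  "C1_strict_incr_on I f \<longleftrightarrow> strict_mono_on I f \<and>
     (\<exists>f'. continuous_on I f' \<and> (\<forall>s\<in>I. (f has_real_derivative f' s) (at s within I)))"

definition traffic_field ::
  "real \<Rightarrow> real \<Rightarrow> real \<Rightarrow> real \<Rightarrow> real \<Rightarrow> real \<Rightarrow> real \<Rightarrow> real \<Rightarrow> real \<Rightarrow> real \<Rightarrow>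
   (real \<Rightarrow> real) \<Rightarrow> (real \<Rightarrow> real) \<Rightarrow> (real \<Rightarrow> real \<Rightarrow> real) \<Rightarrow> (real \<Rightarrow> real \<Rightarrow> real) \<Rightarrow>
   real \<times> real \<Rightarrow> real \<times> real" where
  "traffic_field B1 B2 C1 C2 F1 F2 \<phi> \<alpha> r10 r20 \<tau>1 \<tau>2 r1 r2 x =
     (let R1 = (1 - \<alpha>) * r10 + \<alpha> * r1 (\<tau>1 (fst x)) (\<tau>2 (snd x));
          R2 = (1 - \<alpha>) * r20 + \<alpha> * r2 (\<tau>1 (fst x)) (\<tau>2 (snd x))
      in (min (\<phi> * R1) (supply_fn B1 C1 F1 (fst x)) - demand_fn C1 F1 (fst x),
          min (\<phi> * R2) (supply_fn B2 C2 F2 (snd x)) - demand_fn C2 F2 (snd x)))"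

definition is_solution :: "(real \<times> real \<Rightarrow> real \<times> real) \<Rightarrow> (real \<times> real) set \<Rightarrow>
    (real \<Rightarrow> real \<times> real) \<Rightarrow> bool" where
  "is_solution f \<Omega> x \<longleftrightarrow> (\<forall>t\<ge>0. x t \<in> \<Omega> \<and>
      (x has_vector_derivative f (x t)) (at t within {0..}))"

end

theory Submission
  imports Defs
begin

text \<open>On a congested route (\<open>x\<^sub>i > C\<^sub>i\<close>) the inflow is at most the supply
  \<open>F\<^sub>i (B\<^sub>i - x\<^sub>i) / (B\<^sub>i - C\<^sub>i)\<close> while the outflow is the full capacity \<open>F\<^sub>i\<close>, so the excess
  \<open>x\<^sub>i - C\<^sub>i\<close> obeys \<open>d/dt (x\<^sub>i - C\<^sub>i) \<le> -F\<^sub>i/(B\<^sub>i - C\<^sub>i) (x\<^sub>i - C\<^sub>i)\<close> whatever the routing.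
  Hence the positive part of the excess decays exponentially, uniformly over \<open>\<Omega>\<close>: it stays
  zero if it starts at zero, and eventually drops below any margin around the compact box
  \<open>P\<close>. Only the supply/demand structure, positivity and \<open>C\<^sub>i < B\<^sub>i\<close> enter.\<close>

lemma le_if_deriv_nonpos_above:
  fixes h h' :: "real \<Rightarrow> real"
  assumes deriv: "\<And>t. t \<ge> 0 \<Longrightarrow> (h has_real_derivative h' t) (at t within {0..})"
    and nonpos: "\<And>t. t \<ge> 0 \<Longrightarrow> h t > m \<Longrightarrow> h' t \<le> 0"
    and "h 0 \<le> m" and "t \<ge> 0"
  shows "h t \<le> m"
proof (rule ccontr)
  assume ht: "\<not> h t \<le> m"
  have cont: "continuous_on {0..} h" using deriv by (intro DERIV_continuous_on) auto
  define S where "S = {0..t} \<inter> h -` {..m}"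
  have "closed S" unfolding S_def
    by (rule continuous_closed_preimage) (use cont \<open>t \<ge> 0\<close> in \<open>auto intro: continuous_on_subset\<close>)
  moreover have "0 \<in> S" and bdd: "bdd_above S"
    using assms(3,4) by (auto simp: S_def bdd_above_def)
  ultimately have "Sup S \<in> S" and "Sup S \<ge> 0"
    using closed_contains_Sup cSup_upper by blast+
  define s where "s = Sup S"
  have hs: "h s \<le> m" and "s < t"
    using \<open>Sup S \<in> S\<close> ht unfolding s_def S_def by (auto simp: order.order_iff_strict)
  have above: "h u > m" if "s < u" "u \<le> t" for u
    using that \<open>Sup S \<ge> 0\<close> cSup_upper[OF _ bdd, of u] unfolding s_def S_def by fastforce
  have "h t \<le> h s"
  proof (rule DERIV_nonpos_imp_decreasing_open[of s t])
    show "s \<le> t" using \<open>s < t\<close> by simp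
    show "continuous_on {s..t} h"
      using cont \<open>Sup S \<ge> 0\<close> s_def by (auto intro: continuous_on_subset)
    fix u assume u: "s < u" "u < t"
    then have "u > 0" using \<open>Sup S \<ge> 0\<close> s_def by simp
    then have "(h has_real_derivative h' u) (at u)"
      using deriv[of u] at_within_interior[of u "{0..}"] by simp
    then show "\<exists>y. (h has_real_derivative y) (at u) \<and> y \<le> 0"
      using nonpos[of u] above[of u] u \<open>u > 0\<close> by auto
  qed
  then show False using hs ht by simp
qed

lemma exp_decay_if_deriv_le:
  fixes g g' :: "real \<Rightarrow> real"
  assumes deriv: "\<And>t. t \<ge> 0 \<Longrightarrow> (g has_real_derivative g' t) (at t within {0..})"
    and decay: "\<And>t. t \<ge> 0 \<Longrightarrow> g t > 0 \<Longrightarrow> g' t \<le> - k * g t"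
    and "t \<ge> 0"
  shows "g t \<le> max (g 0) 0 * exp (- k * t)"
proof -
  define h where "h = (\<lambda>t. g t * exp (k * t))"
  have deriv_h: "(h has_real_derivative g' t * exp (k * t) + g t * (k * exp (k * t)))
      (at t within {0..})" if "t \<ge> 0" for t
    unfolding h_def using that by (auto intro!: derivative_eq_intros deriv)
  have nonpos_h: "g' t * exp (k * t) + g t * (k * exp (k * t)) \<le> 0"
    if "t \<ge> 0" "h t > max (g 0) 0" for t
  proof -
    have "g t > 0" using that(2) by (simp add: h_def zero_less_mult_iff)
    then have "(g' t + k * g t) * exp (k * t) \<le> 0"
      using decay[OF that(1)] by (simp add: mult_nonpos_nonneg)
    then show ?thesis by (simp add: algebra_simps)
  qed
  have "h t \<le> max (g 0) 0"
    using le_if_deriv_nonpos_above[OF deriv_h nonpos_h] \<open>t \<ge> 0\<close> by (simp add: h_def)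
  then have "h t * exp (- k * t) \<le> max (g 0) 0 * exp (- k * t)"
    by (rule mult_right_mono) simp
  moreover have "h t * exp (- k * t) = g t"
    by (simp add: h_def mult.assoc exp_add[symmetric])
  ultimately show ?thesis by linarith
qed

lemma exp_decay_eventually_lt:
  fixes c k e :: real
  assumes "c > 0" "k > 0" "e > 0"
  shows "\<exists>T>0. \<forall>t\<ge>T. c * exp (- k * t) < e"
proof (intro exI[of _ "max 1 (ln (c / e) / k + 1)"] conjI allI impI)
  fix t assume "max 1 (ln (c / e) / k + 1) \<le> t"
  then have "ln (c / e) / k < t" by linarith
  then have "ln (c / e) < k * t" using assms by (simp add: divide_less_eq mult.commute)
  then have "exp (- k * t) < exp (- ln (c / e))" by simp
  also have "\<dots> = e / c" using assms by (simp add: exp_minus)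
  finally show "c * exp (- k * t) < e" using assms by (simp add: field_simps)
qed simp

lemma congested_net_flow_le:
  assumes "C < B" "s > C"
  shows "min a (supply_fn B C F s) - demand_fn C F s \<le> - (F / (B - C)) * (s - C)"
proof -
  have "min a (supply_fn B C F s) - demand_fn C F s \<le> F / (B - C) * (B - s) - F"
    using assms by (simp add: supply_fn_def demand_fn_def)
  also have "\<dots> = - (F / (B - C)) * (s - C)"
    using assms by (simp add: field_simps)
  finally show ?thesis .
qed

lemma solution_excess_decay:
  fixes \<pi> :: "real \<times> real \<Rightarrow> real"
  assumes sol: "is_solution f \<Omega> x" and "bounded_linear \<pi>"
    and congested: "\<And>z. \<pi> z > c \<Longrightarrow> \<pi> (f z) \<le> - k * (\<pi> z - c)"
    and "\<pi> (x 0) - c \<le> d" "0 \<le> d" "t \<ge> 0"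
  shows "\<pi> (x t) - c \<le> d * exp (- k * t)"
proof -
  have "\<pi> (x t) - c \<le> max (\<pi> (x 0) - c) 0 * exp (- k * t)"
  proof (rule exp_decay_if_deriv_le[OF _ _ \<open>t \<ge> 0\<close>])
    fix t :: real assume "t \<ge> 0"
    then have "(x has_vector_derivative f (x t)) (at t within {0..})"
      using sol by (simp add: is_solution_def)
    from bounded_linear.has_vector_derivative[OF \<open>bounded_linear \<pi>\<close> this]
    show "((\<lambda>t. \<pi> (x t) - c) has_real_derivative \<pi> (f (x t))) (at t within {0..})"
      by (auto simp: has_real_derivative_iff_has_vector_derivative o_def
          intro!: derivative_eq_intros)
  qed (use congested in simp)
  also have "\<dots> \<le> d * exp (- k * t)"
    using assms(4,5) by (intro mult_right_mono) simp_all
  finally show ?thesis .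
qed

lemma traffic_solution_excess_decay:
  assumes "C1 < B1" "C2 < B2"
    and sol: "is_solution (traffic_field B1 B2 C1 C2 F1 F2 \<phi> \<alpha> r10 r20 \<tau>1 \<tau>2 r1 r2) \<Omega> x"
    and "fst (x 0) - C1 \<le> d1" "snd (x 0) - C2 \<le> d2" "0 \<le> d1" "0 \<le> d2" "t \<ge> 0"
  shows "fst (x t) - C1 \<le> d1 * exp (- (F1 / (B1 - C1)) * t)"
    and "snd (x t) - C2 \<le> d2 * exp (- (F2 / (B2 - C2)) * t)"
proof -
  show "fst (x t) - C1 \<le> d1 * exp (- (F1 / (B1 - C1)) * t)"
  proof (rule solution_excess_decay[OF sol bounded_linear_fst])
    fix z :: "real \<times> real" assume "fst z > C1"
    then show "fst (traffic_field B1 B2 C1 C2 F1 F2 \<phi> \<alpha> r10 r20 \<tau>1 \<tau>2 r1 r2 z)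
        \<le> - (F1 / (B1 - C1)) * (fst z - C1)"
      using congested_net_flow_le[OF \<open>C1 < B1\<close>] by (simp add: traffic_field_def Let_def)
  qed (use assms in auto)
  show "snd (x t) - C2 \<le> d2 * exp (- (F2 / (B2 - C2)) * t)"
  proof (rule solution_excess_decay[OF sol bounded_linear_snd])
    fix z :: "real \<times> real" assume "snd z > C2"
    then show "snd (traffic_field B1 B2 C1 C2 F1 F2 \<phi> \<alpha> r10 r20 \<tau>1 \<tau>2 r1 r2 z)
        \<le> - (F2 / (B2 - C2)) * (snd z - C2)"
      using congested_net_flow_le[OF \<open>C2 < B2\<close>] by (simp add: traffic_field_def Let_def)
  qed (use assms in auto)
qed

lemma near_Icc_Times_Icc:
  fixes a b e :: real and z :: "real \<times> real"
  assumes "e > 0" "0 \<le> a" "0 \<le> b" "0 \<le> fst z" "0 \<le> snd z"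
    and "fst z - a < e / 2" "snd z - b < e / 2"
  shows "\<exists>p\<in>{0..a} \<times> {0..b}. dist p z < e"
proof
  let ?p = "(min (fst z) a, min (snd z) b)"
  show "?p \<in> {0..a} \<times> {0..b}" using assms by auto
  have "dist ?p z = norm (z - ?p)" by (simp add: dist_norm norm_minus_commute)
  also have "\<dots> = norm (fst z - min (fst z) a, snd z - min (snd z) b)"
    by (cases z) simp
  also have "\<dots> \<le> norm (fst z - min (fst z) a) + norm (snd z - min (snd z) b)"
    by (rule norm_Pair_le)
  also have "\<dots> < e" using assms by (auto simp: min_def)
  finally show "dist ?p z < e" .
qed

lemma Icc_Times_Icc_attracts_exp_decay:
  fixes a b c1 c2 k1 k2 :: real and U :: "(real \<times> real) set"
  assumes "open U" "{0..a} \<times> {0..b} \<subseteq> U" "0 \<le> a" "0 \<le> b"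
    and "c1 > 0" "c2 > 0" "k1 > 0" "k2 > 0"
  shows "\<exists>T>0. \<forall>t>T. \<forall>z. 0 \<le> fst z \<longrightarrow> 0 \<le> snd z \<longrightarrow>
           fst z - a \<le> c1 * exp (- k1 * t) \<longrightarrow> snd z - b \<le> c2 * exp (- k2 * t) \<longrightarrow> z \<in> U"
proof -
  have "compact ({0..a} \<times> {0..b})" by (intro compact_Times compact_Icc)
  then obtain e where "e > 0" and e: "(\<Union>p\<in>{0..a} \<times> {0..b}. ball p e) \<subseteq> U"
    using compact_subset_open_imp_ball_epsilon_subset assms(1,2) by metis
  obtain T1 where "T1 > 0" and T1: "\<forall>t\<ge>T1. c1 * exp (- k1 * t) < e / 2"
    using exp_decay_eventually_lt[of c1 k1 "e / 2"] assms \<open>e > 0\<close> by auto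
  obtain T2 where "T2 > 0" and T2: "\<forall>t\<ge>T2. c2 * exp (- k2 * t) < e / 2"
    using exp_decay_eventually_lt[of c2 k2 "e / 2"] assms \<open>e > 0\<close> by auto
  have "z \<in> U" if t: "t > max T1 T2" and nonneg: "0 \<le> fst z" "0 \<le> snd z"
    and excess: "fst z - a \<le> c1 * exp (- k1 * t)" "snd z - b \<le> c2 * exp (- k2 * t)" for t z
  proof -
    have "c1 * exp (- k1 * t) < e / 2" "c2 * exp (- k2 * t) < e / 2"
      using t T1 T2 by simp_all
    then have "fst z - a < e / 2" "snd z - b < e / 2" using excess by linarith+
    then obtain p where "p \<in> {0..a} \<times> {0..b}" "dist p z < e"
      using near_Icc_Times_Icc \<open>e > 0\<close> assms(3,4) nonneg by blast
    then have "z \<in> (\<Union>p\<in>{0..a} \<times> {0..b}. ball p e)" by (intro UN_I[of p]) simp_all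
    then show "z \<in> U" using e by blast
  qed
  then show ?thesis using \<open>T1 > 0\<close> by (intro exI[of _ "max T1 T2"]) auto
qed

theorem lemma1:
  fixes B1 B2 C1 C2 F1 F2 \<phi> \<alpha> r10 r20 :: real
    and \<tau>1 \<tau>2 :: "real \<Rightarrow> real"
    and r1 r2 :: "real \<Rightarrow> real \<Rightarrow> real"
  defines "\<Omega> \<equiv> {0..B1} \<times> {0..B2}"
    and "P \<equiv> {0..C1} \<times> {0..C2}"
    and "f \<equiv> traffic_field B1 B2 C1 C2 F1 F2 \<phi> \<alpha> r10 r20 \<tau>1 \<tau>2 r1 r2"
  assumes pos: "B1 > 0" "B2 > 0" "C1 > 0" "C2 > 0" "F1 > 0" "F2 > 0" "\<phi> > 0"
    and CB: "C1 < B1" "C2 < B2"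
    and alpha: "0 < \<alpha>" "\<alpha> \<le> 1"
    and r0: "r10 \<ge> 0" "r20 \<ge> 0" "r10 + r20 = 1"
    and A1: "\<phi> < F1 + F2"
    and A2: "C1_strict_incr_on {0..B1} \<tau>1" "C1_strict_incr_on {0..B2} \<tau>2"
    and A3_range: "\<forall>x\<in>\<Omega>. 0 \<le> r1 (\<tau>1 (fst x)) (\<tau>2 (snd x)) \<and> r1 (\<tau>1 (fst x)) (\<tau>2 (snd x)) \<le> 1
                        \<and> 0 \<le> r2 (\<tau>1 (fst x)) (\<tau>2 (snd x)) \<and> r2 (\<tau>1 (fst x)) (\<tau>2 (snd x)) \<le> 1"
    and A3_sum: "\<forall>x\<in>\<Omega>. r1 (\<tau>1 (fst x)) (\<tau>2 (snd x)) + r2 (\<tau>1 (fst x)) (\<tau>2 (snd x)) = 1"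
    and A3_lip: "\<exists>L. L > 0 \<and> L-lipschitz_on \<Omega> (\<lambda>x. r1 (\<tau>1 (fst x)) (\<tau>2 (snd x)))"
                "\<exists>L. L > 0 \<and> L-lipschitz_on \<Omega> (\<lambda>x. r2 (\<tau>1 (fst x)) (\<tau>2 (snd x)))"
    and A3_C1: "C1_on_state \<Omega> (\<lambda>x. r1 (\<tau>1 (fst x)) (\<tau>2 (snd x)))"
               "C1_on_state \<Omega> (\<lambda>x. r2 (\<tau>1 (fst x)) (\<tau>2 (snd x)))"
    and A4: "\<forall>x\<in>\<Omega>. \<exists>d>0. ((\<lambda>s. \<alpha> * r1 (\<tau>1 (fst x)) s) has_real_derivative d)
                              (at (\<tau>2 (snd x)) within \<tau>2 ` {0..B2})"
            "\<forall>x\<in>\<Omega>. \<exists>d>0. ((\<lambda>s. \<alpha> * r2 s (\<tau>2 (snd x))) has_real_derivative d)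
                              (at (\<tau>1 (fst x)) within \<tau>1 ` {0..B1})"
    and A5: "F1 > (1 - \<alpha>) * \<phi> * r10" "F2 > (1 - \<alpha>) * \<phi> * r20"
  shows "(\<forall>x. is_solution f \<Omega> x \<longrightarrow> x 0 \<in> P \<longrightarrow> (\<forall>t\<ge>0. x t \<in> P))
       \<and> (\<forall>U x0. open U \<longrightarrow> P \<subseteq> U \<longrightarrow> x0 \<in> \<Omega> \<longrightarrow>
            (\<exists>T>0. \<forall>x. is_solution f \<Omega> x \<longrightarrow> x 0 = x0 \<longrightarrow> (\<forall>t>T. x t \<in> U)))"
proof -
  define k1 where "k1 = F1 / (B1 - C1)"
  define k2 where "k2 = F2 / (B2 - C2)"
  have "k1 > 0" "k2 > 0" using pos CB by (auto simp: k1_def k2_def)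
  note excess = traffic_solution_excess_decay[OF CB, of F1 F2 \<phi> \<alpha> r10 r20 \<tau>1 \<tau>2 r1 r2,
      folded f_def k1_def k2_def]
  have in_\<Omega>: "x t \<in> \<Omega>" if "is_solution f \<Omega> x" "t \<ge> 0" for x t
    using that by (simp add: is_solution_def)
  show ?thesis
  proof (intro conjI allI impI)
    fix x t assume sol: "is_solution f \<Omega> x" and "x 0 \<in> P" "(t::real) \<ge> 0"
    then show "x t \<in> P"
      using excess[OF sol, of 0 0 t] in_\<Omega>[OF sol \<open>t \<ge> 0\<close>] by (auto simp: P_def \<Omega>_def)
  next
    fix U x0 assume "open U" "P \<subseteq> U" "x0 \<in> \<Omega>"
    then obtain T where "T > 0" and T: "\<forall>t>T. \<forall>z. 0 \<le> fst z \<longrightarrow> 0 \<le> snd z \<longrightarrow>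
        fst z - C1 \<le> (B1 - C1) * exp (- k1 * t) \<longrightarrow> snd z - C2 \<le> (B2 - C2) * exp (- k2 * t)
        \<longrightarrow> z \<in> U"
      using Icc_Times_Icc_attracts_exp_decay[of U C1 C2 "B1 - C1" "B2 - C2" k1 k2]
        pos CB \<open>k1 > 0\<close> \<open>k2 > 0\<close> unfolding P_def by auto
    have "x t \<in> U" if sol: "is_solution f \<Omega> x" and "x 0 = x0" "t > T" for x t
      using T excess[OF sol, of "B1 - C1" "B2 - C2" t] in_\<Omega>[OF sol, of t] \<open>x0 \<in> \<Omega>\<close> that
        \<open>T > 0\<close> CB by (auto simp: \<Omega>_def)
    then show "\<exists>T>0. \<forall>x. is_solution f \<Omega> x \<longrightarrow> x 0 = x0 \<longrightarrow> (\<forall>t>T. x t \<in> U)"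
      using \<open>T > 0\<close> by blast
  qed
qed

end
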